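(* Let $k,n\in\mathbb N^+$ and $\mathbf C=(c_0,\dots,c_k)\in\{0,1\}^{k+1}$. For every integer $m\ge c_k-1$, $$O_{\mathbf C}(n+1,m+1)=n^kF_{n+1}(\mathbf C)\,O_{\mathbf C}(n,m)+n^kF_{n+1}(\mathbf C')\,O_{\mathbf C}(n,m+1),$$ and the boundary values are $O_{\mathbf C}(n,m)=0$ whenever $m=c_k-1$ or $m>c_k-1+n$, and $O_{\mathbf C}(1,c_k)=1$.
   Context: Fix integers $k\ge 1$, $n\ge 1$ and a vector $\mathbf C=(c_0,c_1,\dots,c_k)\in\{0,1\}^{k+1}$; put $\mathbf C'=(1,\dots,1)-\mathbf C$. Consider $k$-tuples $(\pi_1,\dots,\pi_k)$ of permutations of $\{1,\dots,n\}$. A position $\alpha\in\{1,\dots,n\}$ is a record of a permutation $\pi$ if $\pi(\alpha)<\pi(\alpha')$ for every $\alpha'<\alpha$ (position $1$ is always a record); equivalently, records index the minimal elements of the points $(\alpha,\pi(\alpha))$ under strict componentwise domination. For a tuple, let $l_\alpha$ be the number of $\beta\in\{1,\dots,k\}$ for which $\alpha$ is a record of $\pi_\beta$ (so $l_1=k$). The $\mathbf C$ sequential optimization set of the tuple is $S=\{\alpha: c_{l_\alpha}=1\}$, with weight $|S|$. For an integer $m$, $O_{\mathbf C}(n,m)$ is the number of $k$-tuples of permutations of $\{1,\dots,n\}$ whose weight equals $m$ (so it is $0$ for $m<0$ or $m>n$). For $j\ge 2$ and $X=(x_0,\dots,x_k)\in\mathbb R^{k+1}$, $F_j(X)=\sum_{\beta=0}^k\binom{k}{\beta}\frac{x_\beta}{(j-1)^\beta}$.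 *)

theory Defs
  imports "HOL-Combinatorics.Permutations" Complex_Main
begin

definition is_record :: "(nat \<Rightarrow> nat) \<Rightarrow> nat \<Rightarrow> bool" where
  "is_record p a \<longleftrightarrow> (\<forall>a'\<in>{1..<a}. p a < p a')"

definition perm_tuples :: "nat \<Rightarrow> nat \<Rightarrow> (nat \<Rightarrow> nat) list set" where
  "perm_tuples k n = {ps. length ps = k \<and> (\<forall>p\<in>set ps. p permutes {1..n})}"

definition rec_count :: "(nat \<Rightarrow> nat) list \<Rightarrow> nat \<Rightarrow> nat" where
  "rec_count ps a = card {b\<in>{..<length ps}. is_record (ps ! b) a}"

definition seq_opt_set :: "nat list \<Rightarrow> nat \<Rightarrow> (nat \<Rightarrow> nat) list \<Rightarrow> nat set" where
  "seq_opt_set C n ps = {a\<in>{1..n}. C ! rec_count ps a = 1}"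

definition seq_weight :: "nat list \<Rightarrow> nat \<Rightarrow> (nat \<Rightarrow> nat) list \<Rightarrow> nat" where
  "seq_weight C n ps = card (seq_opt_set C n ps)"

definition O_count :: "nat list \<Rightarrow> nat \<Rightarrow> int \<Rightarrow> nat" where
  "O_count C n m = card {ps\<in>perm_tuples (length C - 1) n. int (seq_weight C n ps) = m}"

definition F_fun :: "nat \<Rightarrow> nat list \<Rightarrow> real" where
  "F_fun j X = (\<Sum>b=0..length X - 1. real (((length X - 1) choose b)) * real (X ! b) / (real j - 1) ^ b)"

definition compl_vec :: "nat list \<Rightarrow> nat list" where
  "compl_vec C = map (\<lambda>x. 1 - x) C"

end

theory Submission
  imports Defs
begin

(* Deleting the last position of a permutation of {1..n+1} and standardizing the remaining
   values gives a bijection onto pairs (permutation of {1..n}, value at n+1).  It preserves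
   the records at positions 1..n, and n+1 is a record iff the value there is 1.  Hence over a
   fixed reduced k-tuple exactly (k choose b) n^(k-b) tuples have l_(n+1) = b, and n+1 joins
   the optimization set iff c_b = 1.  Since n^k (k choose b) / n^b = (k choose b) n^(k-b),
   summing over b gives the factors n^k F_(n+1)(C) and n^k F_(n+1)(C'). *)

definition reduce_perm :: "nat \<Rightarrow> (nat \<Rightarrow> nat) \<Rightarrow> nat \<Rightarrow> nat" where
  "reduce_perm n s a = (if a \<in> {1..n} then (if s a < s (Suc n) then s a else s a - 1) else a)"

lemma permutes_Suc_values:
  assumes s: "s permutes {1..Suc n}"
  shows "s (Suc n) \<in> {1..Suc n}"
    and "a \<in> {1..n} \<Longrightarrow> s a \<in> {1..Suc n} \<and> s a \<noteq> s (Suc n)"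
  using permutes_in_image[OF s] permutes_inj[OF s] by (auto dest: injD)

lemma reduce_perm_permutes:
  assumes s: "s permutes {1..Suc n}"
  shows "reduce_perm n s permutes {1..n}"
proof (rule bij_imp_permutes)
  note bounds = permutes_Suc_values[OF s]
  have "reduce_perm n s a \<in> {1..n}" if "a \<in> {1..n}" for a
    using bounds(1) bounds(2)[OF that] that by (auto simp: reduce_perm_def)
  then have "reduce_perm n s ` {1..n} \<subseteq> {1..n}" by auto
  moreover have "inj_on (reduce_perm n s) {1..n}"
  proof (rule inj_onI)
    fix a b assume a: "a \<in> {1..n}" and b: "b \<in> {1..n}"
      and eq: "reduce_perm n s a = reduce_perm n s b"
    then have "s a = s b"
      using bounds(2)[OF a] bounds(2)[OF b] by (auto simp: reduce_perm_def split: if_splits)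
    then show "a = b" using permutes_inj[OF s] by (auto dest: injD)
  qed
  ultimately show "bij_betw (reduce_perm n s) {1..n} {1..n}"
    using endo_inj_surj[of "{1..n}" "reduce_perm n s"] by (simp add: bij_betw_def)
  show "reduce_perm n s x = x" if "x \<notin> {1..n}" for x
    using that by (auto simp: reduce_perm_def)
qed

lemma inj_on_reduce_perm_last:
  "inj_on (\<lambda>s. (reduce_perm n s, s (Suc n))) {s. s permutes {1..Suc n}}"
proof (rule inj_onI)
  fix s t assume "s \<in> {s. s permutes {1..Suc n}}" "t \<in> {s. s permutes {1..Suc n}}"
    and eq: "(reduce_perm n s, s (Suc n)) = (reduce_perm n t, t (Suc n))"
  then have s: "s permutes {1..Suc n}" and t: "t permutes {1..Suc n}" by auto
  have last: "s (Suc n) = t (Suc n)" using eq by simp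
  show "s = t"
  proof
    fix a
    consider "a \<in> {1..n}" | "a = Suc n" | "a \<notin> {1..Suc n}" by fastforce
    then show "s a = t a"
    proof cases
      case 1
      then show ?thesis
        using fun_cong[OF arg_cong[OF eq, of fst], of a] last
          permutes_Suc_values(2)[OF s 1] permutes_Suc_values(2)[OF t 1]
        by (auto simp: reduce_perm_def split: if_splits)
    qed (use last permutes_not_in[OF s] permutes_not_in[OF t] in auto)
  qed
qed

lemma bij_betw_reduce_perm_last:
  "bij_betw (\<lambda>s. (reduce_perm n s, s (Suc n))) {s. s permutes {1..Suc n}}
     ({t. t permutes {1..n}} \<times> {1..Suc n})"
proof -
  let ?f = "\<lambda>s. (reduce_perm n s, s (Suc n))"
  have sub: "?f ` {s. s permutes {1..Suc n}} \<subseteq> {t. t permutes {1..n}} \<times> {1..Suc n}"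
    using reduce_perm_permutes permutes_Suc_values(1) by auto
  have "card (?f ` {s. s permutes {1..Suc n}}) = fact (Suc n)"
    using card_image[OF inj_on_reduce_perm_last] card_permutations[of "{1..Suc n}" "Suc n"]
    by simp
  also have "\<dots> = card ({t. t permutes {1..n}} \<times> {1..Suc n})"
    using card_permutations[of "{1..n}" n] by (simp add: card_cartesian_product)
  finally have "?f ` {s. s permutes {1..Suc n}} = {t. t permutes {1..n}} \<times> {1..Suc n}"
    using card_subset_eq[OF _ sub] finite_permutations[of "{1..n}"] by simp
  then show ?thesis using inj_on_reduce_perm_last by (simp add: bij_betw_def)
qed

lemma sum_permutes_Suc:
  "(\<Sum>s | s permutes {1..Suc n}. g (reduce_perm n s) (s (Suc n)))
     = (\<Sum>t | t permutes {1..n}. \<Sum>v = 1..Suc n. g t v)"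
  using sum.reindex_bij_betw[OF bij_betw_reduce_perm_last, of "case_prod g"]
  by (simp add: sum.cartesian_product[symmetric])

lemma is_record_reduce_perm:
  assumes s: "s permutes {1..Suc n}" and a: "a \<in> {1..n}"
  shows "is_record (reduce_perm n s) a \<longleftrightarrow> is_record s a"
proof -
  have "reduce_perm n s a < reduce_perm n s a' \<longleftrightarrow> s a < s a'" if "a' \<in> {1..<a}" for a'
    using that a permutes_Suc_values(1)[OF s] permutes_Suc_values(2)[OF s, of a]
      permutes_Suc_values(2)[OF s, of a']
    by (auto simp: reduce_perm_def)
  then show ?thesis unfolding is_record_def by auto
qed

lemma is_record_last_iff:
  assumes s: "s permutes {1..Suc n}"
  shows "is_record s (Suc n) \<longleftrightarrow> s (Suc n) = 1"
proof
  assume is_rec: "is_record s (Suc n)"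
  obtain a where a: "a \<in> {1..Suc n}" "s a = 1"
    using permutes_image[OF s] by (metis atLeastAtMost_iff imageE le_add1 plus_1_eq_Suc order.refl)
  show "s (Suc n) = 1"
  proof (rule ccontr)
    assume "s (Suc n) \<noteq> 1"
    then have "a \<in> {1..<Suc n}" using a by (cases "a = Suc n") auto
    then show False
      using is_rec a permutes_Suc_values(1)[OF s] unfolding is_record_def by fastforce
  qed
next
  assume "s (Suc n) = 1"
  then show "is_record s (Suc n)"
    unfolding is_record_def using permutes_Suc_values(2)[OF s] by fastforce
qed

lemma perm_tuples_0: "perm_tuples 0 n = {[]}"
  unfolding perm_tuples_def by auto

lemma perm_tuples_Suc:
  "perm_tuples (Suc k) n = (\<lambda>(p, ps). p # ps) ` ({p. p permutes {1..n}} \<times> perm_tuples k n)"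
  unfolding perm_tuples_def by (force simp: length_Suc_conv)

lemma finite_perm_tuples: "finite (perm_tuples k n)"
  by (induction k) (auto simp: perm_tuples_0 perm_tuples_Suc finite_permutations)

lemma perm_tuples_1: "perm_tuples k 1 = {replicate k id}"
  unfolding perm_tuples_def by (auto simp: replicate_eqI)

lemma sum_perm_tuples_Suc:
  "(\<Sum>ps\<in>perm_tuples (Suc k) n. f ps)
     = (\<Sum>p | p permutes {1..n}. \<Sum>ps\<in>perm_tuples k n. f (p # ps))"
  unfolding perm_tuples_Suc
  by (subst sum.reindex) (auto simp: inj_on_def sum.cartesian_product case_prod_unfold)

lemma rec_count_Cons: "rec_count (p # ps) a = of_bool (is_record p a) + rec_count ps a"
proof -
  have "rec_count qs a = length (filter (\<lambda>p. is_record p a) qs)" for qs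
    unfolding rec_count_def length_filter_conv_card by (simp add: lessThan_def conj_commute)
  then show ?thesis by simp
qed

lemma rec_count_1: "rec_count ps 1 = length ps"
  unfolding rec_count_def is_record_def by simp

lemma rec_count_map_reduce_perm:
  assumes ps: "ps \<in> perm_tuples k (Suc n)" and a: "a \<in> {1..n}"
  shows "rec_count (map (reduce_perm n) ps) a = rec_count ps a"
proof -
  have "is_record (reduce_perm n (ps ! b)) a \<longleftrightarrow> is_record (ps ! b) a" if "b < length ps" for b
    using is_record_reduce_perm[OF _ a] ps that nth_mem unfolding perm_tuples_def by blast
  then show ?thesis unfolding rec_count_def by (auto intro!: arg_cong[where f = card])
qed

lemma seq_weight_Suc:
  assumes ps: "ps \<in> perm_tuples k (Suc n)"
  shows "seq_weight C (Suc n) ps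
           = seq_weight C n (map (reduce_perm n) ps) + of_bool (C ! rec_count ps (Suc n) = 1)"
proof -
  let ?S = "seq_opt_set C n (map (reduce_perm n) ps)"
  have "seq_opt_set C (Suc n) ps
          = (if C ! rec_count ps (Suc n) = 1 then insert (Suc n) ?S else ?S)"
    unfolding seq_opt_set_def using rec_count_map_reduce_perm[OF ps] by (auto simp: le_Suc_eq)
  moreover have "finite ?S" "Suc n \<notin> ?S" unfolding seq_opt_set_def by auto
  ultimately show ?thesis unfolding seq_weight_def by auto
qed

lemma binomial_sum_Suc:
  fixes f :: "nat \<Rightarrow> 'a::comm_semiring_1"
  shows "(\<Sum>b\<le>Suc k. of_nat (Suc k choose b) * x ^ (Suc k - b) * f b)
       = (\<Sum>b\<le>k. of_nat (k choose b) * x ^ (k - b) * (f (Suc b) + x * f b))"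
proof -
  have "(\<Sum>b\<le>k. of_nat (k choose b) * x ^ (k - b) * (x * f b))
          = (\<Sum>b\<le>Suc k. of_nat (k choose b) * x ^ (Suc k - b) * f b)"
    unfolding sum.atMost_Suc
    by (auto intro!: sum.cong simp: Suc_diff_le binomial_eq_0 algebra_simps)
  also have "\<dots> = x ^ Suc k * f 0 + (\<Sum>b\<le>k. of_nat (k choose Suc b) * x ^ (k - b) * f (Suc b))"
    unfolding sum.atMost_Suc_shift by simp
  finally show ?thesis
    unfolding sum.atMost_Suc_shift by (simp add: sum.distrib algebra_simps)
qed

lemma sum_of_bool_eq_1_atLeastAtMost:
  fixes \<phi> :: "nat \<Rightarrow> 'a::semiring_1"
  shows "(\<Sum>v = 1..Suc n. \<phi> (of_bool (v = 1))) = \<phi> 1 + of_nat n * \<phi> 0"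
proof -
  have "{1..Suc n} = insert 1 {2..Suc n}" by auto
  moreover have "(\<Sum>v = 2..Suc n. \<phi> (of_bool (v = 1))) = (\<Sum>v = 2..Suc n. \<phi> 0)"
    by (rule sum.cong) auto
  ultimately show ?thesis by simp
qed

lemma sum_perm_tuples_reduce:
  fixes h :: "(nat \<Rightarrow> nat) list \<Rightarrow> nat \<Rightarrow> 'a::comm_semiring_1"
  shows "(\<Sum>ps\<in>perm_tuples k (Suc n). h (map (reduce_perm n) ps) (rec_count ps (Suc n)))
     = (\<Sum>ts\<in>perm_tuples k n. \<Sum>b\<le>k. of_nat (k choose b) * of_nat n ^ (k - b) * h ts b)"
proof (induction k arbitrary: h)
  case 0
  then show ?case by (simp add: perm_tuples_0 rec_count_def)
next
  case (Suc k)
  define \<phi> where "\<phi> t e = (\<Sum>ts\<in>perm_tuples k n.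
    \<Sum>b\<le>k. of_nat (k choose b) * of_nat n ^ (k - b) * h (t # ts) (e + b))" for t e
  have "(\<Sum>ps\<in>perm_tuples (Suc k) (Suc n). h (map (reduce_perm n) ps) (rec_count ps (Suc n)))
     = (\<Sum>s | s permutes {1..Suc n}. \<Sum>ps\<in>perm_tuples k (Suc n).
          h (reduce_perm n s # map (reduce_perm n) ps)
            (of_bool (s (Suc n) = 1) + rec_count ps (Suc n)))"
    by (auto simp: sum_perm_tuples_Suc rec_count_Cons is_record_last_iff intro!: sum.cong)
  also have "\<dots> = (\<Sum>s | s permutes {1..Suc n}. \<phi> (reduce_perm n s) (of_bool (s (Suc n) = 1)))"
    unfolding \<phi>_def by (rule sum.cong[OF refl], rule Suc.IH)
  also have "\<dots> = (\<Sum>t | t permutes {1..n}. \<phi> t 1 + of_nat n * \<phi> t 0)"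
    by (simp only: sum_permutes_Suc[where g = "\<lambda>t v. \<phi> t (of_bool (v = 1))"]
        sum_of_bool_eq_1_atLeastAtMost)
  also have "\<dots> = (\<Sum>t | t permutes {1..n}. \<Sum>ts\<in>perm_tuples k n.
       \<Sum>b\<le>Suc k. of_nat (Suc k choose b) * of_nat n ^ (Suc k - b) * h (t # ts) b)"
    unfolding binomial_sum_Suc \<phi>_def by (simp add: sum_distrib_left sum.distrib algebra_simps)
  also have "\<dots> = (\<Sum>ts\<in>perm_tuples (Suc k) n.
       \<Sum>b\<le>Suc k. of_nat (Suc k choose b) * of_nat n ^ (Suc k - b) * h ts b)"
    by (simp only: sum_perm_tuples_Suc)
  finally show ?case .
qed

lemma O_count_eq_sum:
  "real (O_count C n m)
     = (\<Sum>ps\<in>perm_tuples (length C - 1) n. of_bool (int (seq_weight C n ps) = m))"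
  unfolding O_count_def by (simp add: finite_perm_tuples Int_def)

lemma scaled_F_fun_eq_sum:
  assumes "length X = k + 1" "n \<ge> 1"
  shows "real n ^ k * F_fun (n + 1) X
           = (\<Sum>b\<le>k. real (k choose b) * real n ^ (k - b) * real (X ! b))"
  unfolding F_fun_def atLeast0AtMost sum_distrib_left
  using assms by (intro sum.cong) (auto simp: power_diff field_simps)

lemma O_count_Suc:
  assumes k: "length C = k + 1" and C: "set C \<subseteq> {0, 1}" and n: "n \<ge> 1"
  shows "real (O_count C (n + 1) (m + 1)) =
           real n ^ k * F_fun (n + 1) C * real (O_count C n m)
           + real n ^ k * F_fun (n + 1) (compl_vec C) * real (O_count C n (m + 1))"
proof -
  have compl_len: "length (compl_vec C) = k + 1" using k by (simp add: compl_vec_def)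
  have C01: "C ! b \<in> {0, 1}" if "b \<le> k" for b
    using subsetD[OF C, of "C ! b"] that k by auto
  define hit where
    "hit ts b = (of_bool (int (seq_weight C n ts + of_bool (C ! b = 1)) = m + 1) :: real)" for ts b
  have hits: "(\<Sum>ts\<in>perm_tuples k n. hit ts b) = real (C ! b) * real (O_count C n m)
                   + real (1 - C ! b) * real (O_count C n (m + 1))" if "b \<le> k" for b
    using C01[OF that] k unfolding hit_def O_count_eq_sum by auto
  have "real (O_count C (n + 1) (m + 1))
      = (\<Sum>ps\<in>perm_tuples k (Suc n). of_bool (int (seq_weight C (Suc n) ps) = m + 1))"
    using k by (simp add: O_count_eq_sum)
  also have "\<dots> = (\<Sum>ps\<in>perm_tuples k (Suc n).
                     hit (map (reduce_perm n) ps) (rec_count ps (Suc n)))"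
    by (intro sum.cong refl) (simp add: hit_def seq_weight_Suc)
  also have "\<dots> = (\<Sum>ts\<in>perm_tuples k n.
                     \<Sum>b\<le>k. real (k choose b) * real n ^ (k - b) * hit ts b)"
    by (rule sum_perm_tuples_reduce)
  also have "\<dots> = (\<Sum>b\<le>k. real (k choose b) * real n ^ (k - b)
                     * (\<Sum>ts\<in>perm_tuples k n. hit ts b))"
    by (subst sum.swap) (simp add: sum_distrib_left)
  also have "\<dots> = (\<Sum>b\<le>k. real (k choose b) * real n ^ (k - b)
                     * (real (C ! b) * real (O_count C n m)
                        + real (compl_vec C ! b) * real (O_count C n (m + 1))))"
    by (intro sum.cong refl) (simp add: hits compl_vec_def k)
  also have "\<dots> = (\<Sum>b\<le>k. real (k choose b) * real n ^ (k - b) * real (C ! b))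
                     * real (O_count C n m)
                  + (\<Sum>b\<le>k. real (k choose b) * real n ^ (k - b) * real (compl_vec C ! b))
                     * real (O_count C n (m + 1))"
    by (simp add: sum_distrib_right sum.distrib mult.assoc distrib_left)
  also have "\<dots> = real n ^ k * F_fun (n + 1) C * real (O_count C n m)
                  + real n ^ k * F_fun (n + 1) (compl_vec C) * real (O_count C n (m + 1))"
    by (simp only: scaled_F_fun_eq_sum[OF k n] scaled_F_fun_eq_sum[OF compl_len n])
  finally show ?thesis .
qed

lemma seq_weight_bounds:
  assumes ps: "ps \<in> perm_tuples k n" and k: "length C = k + 1" and C: "set C \<subseteq> {0, 1}"
    and n: "n \<ge> 1"
  shows "C ! k \<le> seq_weight C n ps" "seq_weight C n ps + 1 \<le> C ! k + n"
proof -
  let ?S = "seq_opt_set C n ps"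
  have Ck: "C ! k \<in> {0, 1}" using subsetD[OF C, of "C ! k"] k by auto
  have sub: "?S \<subseteq> {1..n}" unfolding seq_opt_set_def by auto
  have first: "1 \<in> ?S \<longleftrightarrow> C ! k = 1"
    using ps n rec_count_1[of ps] unfolding seq_opt_set_def perm_tuples_def by auto
  show "C ! k \<le> seq_weight C n ps"
    using first Ck finite_subset[OF sub] card_0_eq unfolding seq_weight_def by fastforce
  show "seq_weight C n ps + 1 \<le> C ! k + n"
  proof (cases "C ! k = 1")
    case True
    then show ?thesis using card_mono[OF _ sub] unfolding seq_weight_def by simp
  next
    case False
    have "?S \<subseteq> {2..n}"
    proof
      fix a assume "a \<in> ?S"
      then have "a \<in> {1..n}" "a \<noteq> 1" using sub first False by auto
      then show "a \<in> {2..n}" by auto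
    qed
    then have "card ?S \<le> card {2..n}" by (intro card_mono) simp_all
    then show ?thesis using False Ck n unfolding seq_weight_def by simp
  qed
qed

lemma O_count_eq_0:
  assumes "length C = k + 1" "set C \<subseteq> {0, 1}" "n \<ge> 1"
    and "m = int (C ! k) - 1 \<or> m > int (C ! k) - 1 + int n"
  shows "O_count C n m = 0"
proof -
  have "int (seq_weight C n ps) \<noteq> m" if "ps \<in> perm_tuples k n" for ps
    using seq_weight_bounds[OF that assms(1-3)] assms(4) by linarith
  then have no_tuple: "{ps \<in> perm_tuples k n. int (seq_weight C n ps) = m} = {}" by blast
  have len: "length C - 1 = k" using assms(1) by simp
  show ?thesis unfolding O_count_def len no_tuple by simp
qed

lemma O_count_1:
  assumes "length C = k + 1" "set C \<subseteq> {0, 1}"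
  shows "O_count C 1 (int (C ! k)) = 1"
proof -
  have "C ! k \<in> {0, 1}" using subsetD[OF assms(2), of "C ! k"] assms(1) by auto
  then have "seq_opt_set C 1 (replicate k id) = (if C ! k = 1 then {1} else {})"
    unfolding seq_opt_set_def using rec_count_1[of "replicate k id"] by auto
  then have "seq_weight C 1 (replicate k id) = C ! k"
    using \<open>C ! k \<in> {0, 1}\<close> unfolding seq_weight_def by auto
  then have "{ps \<in> {replicate k id}. int (seq_weight C 1 ps) = int (C ! k)} = {replicate k id}"
    by auto
  moreover have "length C - 1 = k" using assms(1) by simp
  ultimately show ?thesis unfolding O_count_def perm_tuples_1 by simp
qed

theorem theorem3p1:
  fixes k n :: nat and C :: "nat list"
  assumes "k \<ge> 1" "n \<ge> 1" "length C = k + 1" "set C \<subseteq> {0, 1}"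
  shows "(\<forall>m::int. m \<ge> int (C ! k) - 1 \<longrightarrow>
            real (O_count C (n + 1) (m + 1)) =
              real n ^ k * F_fun (n + 1) C * real (O_count C n m)
              + real n ^ k * F_fun (n + 1) (compl_vec C) * real (O_count C n (m + 1)))
       \<and> (\<forall>m::int. (m = int (C ! k) - 1 \<or> m > int (C ! k) - 1 + int n) \<longrightarrow> O_count C n m = 0)
       \<and> O_count C 1 (int (C ! k)) = 1"
  using O_count_Suc[OF assms(3,4,2)] O_count_eq_0[OF assms(3,4,2)] O_count_1[OF assms(3,4)]
  by blast

end
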